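(* Let $f : \widehat{\mathbb{Z}} \to \widehat{\mathbb{Z}}$ be congruence preserving and $s \in \widehat{\mathbb{Z}}$. Then the map $f{\Uparrow}_s : \widehat{\mathbb{Z}} \to \widehat{\mathbb{Z}}$ is profinite preperiodic. Moreover, if $f$ is tower-stable, then for every $t \in \widehat{\mathbb{Z}}$ the map $(f{\Uparrow}_s){\Uparrow}_t : \widehat{\mathbb{Z}} \to \widehat{\mathbb{Z}}$ is constant, and this constant is independent of $t$.
   Context: $\mathbb{N}=\{1,2,\dots\}$, $\widehat{\mathbb{Z}} = \varprojlim_n \mathbb{Z}/n\mathbb{Z}$; $s\equiv_n t$ means $s-t\in n\widehat{\mathbb{Z}}$; $\widehat{\cdot}:\mathbb{N}\to\widehat{\mathbb{Z}}$ is the natural embedding. A continuous $f$ is congruence preserving if $s\equiv_n t$ implies $f(s)\equiv_n f(t)$ for all $s,t$, $n$; it then induces reductions $f_n:\mathbb{Z}/n\mathbb{Z}\to\mathbb{Z}/n\mathbb{Z}$; $\lambda_f(n)$ is the period of $f_n$ (lcm of the cycle lengths of all points, the cycle length of $x$ being the least $l\ge1$ with $f_n^k(x)=f_n^{k+l}(x)$ for some $k\ge0$). $f$ is tower-stable if for every prime $p$ the largest prime-power divisor of $\lambda_f(p)$ is $< p$ (equivalently, $f_p$ is not a cyclic permutation of length $p$). A continuous map $g:\widehat{\mathbb{Z}}\to\widehat{\mathbb{Z}}$ is profinite preperiodic if for every $x\in\widehat{\mathbb{Z}}$, every $u\in\widehat{\mathbb{Z}}$ and every sequence of positive integers $n_i\to+\infty$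 in $\mathbb{R}$ with $\widehat{n_i}\to u$ in $\widehat{\mathbb{Z}}$, the limit $\lim_i g^{n_i}(x)$ exists and depends only on $u$; in that case $g{\Uparrow}_x:\widehat{\mathbb{Z}}\to\widehat{\mathbb{Z}}$ denotes the (continuous) map $u \mapsto \lim_i g^{n_i}(x)$. Congruence preserving maps are profinite preperiodic, so $f{\Uparrow}_s$ is defined. *)

theory Defs
  imports "HOL-Computational_Algebra.Primes"
begin

text \<open>An element of the profinite completion is a compatible family of residues:
  component n (n \<ge> 1) lies in {0..<n}, and for n dvd m the component at m reduces
  to the component at n. Component 0 is fixed to 0 (unused).\<close>

definition zhat_rep :: "(nat \<Rightarrow> nat) set" where
  "zhat_rep = {x. x 0 = 0 \<and> (\<forall>n>0. x n < n) \<and>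
                 (\<forall>n m. 0 < m \<longrightarrow> n dvd m \<longrightarrow> x m mod n = x n)}"

typedef zhat = zhat_rep
  by (rule exI[of _ "\<lambda>_. 0"]) (simp add: zhat_rep_def)

definition zproj :: "zhat \<Rightarrow> nat \<Rightarrow> nat" where
  "zproj x n = Rep_zhat x n"

definition zcong :: "nat \<Rightarrow> zhat \<Rightarrow> zhat \<Rightarrow> bool" where
  "zcong n s t \<longleftrightarrow> zproj s n = zproj t n"

definition zhat_of_nat :: "nat \<Rightarrow> zhat" where
  "zhat_of_nat k = Abs_zhat (\<lambda>n. if n = 0 then 0 else k mod n)"

definition ztendsto :: "(nat \<Rightarrow> zhat) \<Rightarrow> zhat \<Rightarrow> bool" where
  "ztendsto X u \<longleftrightarrow> (\<forall>n>0. eventually (\<lambda>i. zcong n (X i) u) sequentially)"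

text \<open>Continuity in the profinite topology (basic neighbourhoods x + m Zhat).\<close>
definition zcontinuous :: "(zhat \<Rightarrow> zhat) \<Rightarrow> bool" where
  "zcontinuous g \<longleftrightarrow>
     (\<forall>x. \<forall>n>0. \<exists>m>0. \<forall>y. zcong m y x \<longrightarrow> zcong n (g y) (g x))"

definition congruence_preserving :: "(zhat \<Rightarrow> zhat) \<Rightarrow> bool" where
  "congruence_preserving f \<longleftrightarrow> zcontinuous f \<and>
     (\<forall>n>0. \<forall>s t. zcong n s t \<longrightarrow> zcong n (f s) (f t))"

definition adm_seq :: "(nat \<Rightarrow> nat) \<Rightarrow> zhat \<Rightarrow> bool" where
  "adm_seq ns u \<longleftrightarrow> (\<forall>i. 0 < ns i) \<and> filterlim ns at_top sequentially \<and>
                     ztendsto (\<lambda>i. zhat_of_nat (ns i)) u"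

definition profinite_preperiodic :: "(zhat \<Rightarrow> zhat) \<Rightarrow> bool" where
  "profinite_preperiodic g \<longleftrightarrow> zcontinuous g \<and>
     (\<forall>x u. \<exists>L. \<forall>ns. adm_seq ns u \<longrightarrow> ztendsto (\<lambda>i. (g ^^ ns i) x) L)"

text \<open>g\<Up>_x (u) = lim g^{n_i}(x) for admissible n_i.\<close>
definition zup :: "(zhat \<Rightarrow> zhat) \<Rightarrow> zhat \<Rightarrow> zhat \<Rightarrow> zhat" where
  "zup g x u = (SOME L. \<forall>ns. adm_seq ns u \<longrightarrow> ztendsto (\<lambda>i. (g ^^ ns i) x) L)"

definition red :: "(zhat \<Rightarrow> zhat) \<Rightarrow> nat \<Rightarrow> nat \<Rightarrow> nat" where
  "red f n a = zproj (f (zhat_of_nat a)) n"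

definition cycle_length :: "(nat \<Rightarrow> nat) \<Rightarrow> nat \<Rightarrow> nat" where
  "cycle_length h x = (LEAST l. 1 \<le> l \<and> (\<exists>k. (h ^^ k) x = (h ^^ (k + l)) x))"

definition period :: "(zhat \<Rightarrow> zhat) \<Rightarrow> nat \<Rightarrow> nat" where
  "period f n = Lcm ((cycle_length (red f n)) ` {..<n})"

definition tower_stable :: "(zhat \<Rightarrow> zhat) \<Rightarrow> bool" where
  "tower_stable f \<longleftrightarrow> (\<forall>p::nat. prime p \<longrightarrow>
     (\<forall>q k. prime (q::nat) \<and> q ^ k dvd period f p \<longrightarrow> q ^ k < p))"

end

theory Submission
  imports Defs
begin

text \<open>For \<open>m > 0\<close> the residues of the orbit \<open>f\<^sup>n(s)\<close> modulo \<open>m\<close> are eventually periodic,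
  with period \<open>c(m) \<le> m\<close> (pigeonhole). Hence \<open>g = f\<Up>\<^sub>s\<close> satisfies
  \<open>g(u) \<equiv> f\<^sup>n(s) (mod m)\<close> for every large \<open>n \<equiv> u (mod c(m))\<close>, so \<open>g\<close> induces a map
  \<open>\<int>/c(m) \<rightarrow> \<int>/m\<close>. Iterating \<open>m \<mapsto> c(m)\<close> reaches some \<open>M\<close> with \<open>c(M) = M\<close>: then \<open>g\<close>
  induces a self-map of \<open>\<int>/M\<close>, and an iterate \<open>g\<^sup>r\<close> induces \<open>\<int>/M \<rightarrow> \<int>/m\<close>. So the
  \<open>g\<close>-orbits are eventually periodic modulo every \<open>m\<close>, which is what makes the limits
  defining \<open>g\<Up>\<^sub>t\<close> exist.

  Lifting along \<open>\<int>/dq \<rightarrow> \<int>/d\<close> multiplies cycle lengths by at most \<open>q\<close>, and for a prime \<open>p\<close>,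
  \<open>c(p)\<close> divides \<open>\<lambda>\<^sub>f(p)\<close>, so tower stability forces \<open>c(p) < p\<close>. Hence \<open>c(m) < m\<close>
  for all \<open>m > 1\<close>, the iteration ends at \<open>M = 1\<close>, and \<open>g\<^sup>r\<close> is constant modulo \<open>m\<close>;
  so is every limit \<open>g\<Up>\<^sub>t(u)\<close> of the iterates \<open>g\<^sup>n(t)\<close>.\<close>

lemma zproj_less: "0 < n \<Longrightarrow> zproj x n < n"
  using Rep_zhat[of x] by (simp add: zproj_def zhat_rep_def)

lemma zproj_mod: "0 < m \<Longrightarrow> d dvd m \<Longrightarrow> zproj x m mod d = zproj x d"
  using Rep_zhat[of x] by (simp add: zproj_def zhat_rep_def)

lemma zhat_eqI:
  assumes "\<And>n. 0 < n \<Longrightarrow> zproj x n = zproj y n"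
  shows "x = y"
proof -
  have "Rep_zhat x 0 = Rep_zhat y 0"
    using Rep_zhat[of x] Rep_zhat[of y] by (simp add: zhat_rep_def)
  with assms have "Rep_zhat x n = Rep_zhat y n" for n
    by (cases "n = 0") (simp_all add: zproj_def)
  then have "Rep_zhat x = Rep_zhat y" ..
  then show ?thesis
    by (simp add: Rep_zhat_inject)
qed

lemma zproj_zhat_of_nat: "0 < n \<Longrightarrow> zproj (zhat_of_nat k) n = k mod n"
proof -
  have "(\<lambda>n. if n = 0 then 0 else k mod n) \<in> zhat_rep"
    by (auto simp: zhat_rep_def mod_mod_cancel)
  then show "0 < n \<Longrightarrow> ?thesis"
    by (simp add: zhat_of_nat_def zproj_def Abs_zhat_inverse)
qed

lemma zcong_one: "zcong 1 x y"
  using zproj_less[of 1] by (simp add: zcong_def)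

section \<open>Eventually periodic sequences and cycle lengths\<close>

lemma pigeonhole_atMost:
  fixes c :: "nat \<Rightarrow> nat"
  assumes "\<forall>i\<le>q. c i < q"
  shows "\<exists>i j. i < j \<and> j \<le> q \<and> c i = c j"
proof -
  have "card (c ` {..q}) \<le> card {..<q}"
    using assms by (intro card_mono) auto
  then have "\<not> inj_on c {..q}"
    by (intro pigeonhole) simp
  then obtain i j where "i \<le> q" "j \<le> q" "i \<noteq> j" "c i = c j"
    by (auto simp: inj_on_def)
  then show ?thesis
    by (metis linorder_neqE_nat)
qed

lemma periodic_add_mult:
  fixes N P n t :: nat
  assumes "\<forall>n\<ge>N. a (n + P) = a n" "N \<le> n"
  shows "a (n + t * P) = a n"
proof (induction t)
  case (Suc t)
  have "a (n + Suc t * P) = a ((n + t * P) + P)"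
    by (simp add: algebra_simps)
  with assms Suc show ?case
    by simp
qed simp

lemma periodic_mod_eq:
  fixes N P n n' :: nat
  assumes per: "\<forall>n\<ge>N. a (n + P) = a n"
    and "N \<le> n" "N \<le> n'" "n mod P = n' mod P"
  shows "a n = a n'"
proof -
  have ordered: "a y = a x" if "N \<le> x" "x \<le> y" "y mod P = x mod P" for x y
  proof -
    have "P dvd y - x"
      using that by (simp add: mod_eq_dvd_iff_nat)
    then obtain t where "y - x = P * t" ..
    then have "y = x + t * P"
      using that by (simp add: algebra_simps)
    then show ?thesis
      using periodic_add_mult[OF per \<open>N \<le> x\<close>] by simp
  qed
  show ?thesis
  proof (cases "n \<le> n'")
    case True
    with assms ordered[of n n'] show ?thesis by simp
  next
    case False
    with assms ordered[of n' n] show ?thesis by simp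
  qed
qed

lemma funpow_periodic:
  fixes h :: "'a \<Rightarrow> 'a"
  assumes "(h ^^ k) x = (h ^^ (k + l)) x"
  shows "\<forall>n\<ge>k. (h ^^ (n + l)) x = (h ^^ n) x"
proof (intro allI impI)
  fix n assume "k \<le> n"
  then obtain d where n: "n = d + k"
    by (metis le_add_diff_inverse2)
  have "(h ^^ (n + l)) x = (h ^^ d) ((h ^^ (k + l)) x)"
    by (simp add: n funpow_add add.assoc)
  also have "\<dots> = (h ^^ d) ((h ^^ k) x)"
    by (simp only: assms)
  also have "\<dots> = (h ^^ n) x"
    by (simp add: n funpow_add)
  finally show "(h ^^ (n + l)) x = (h ^^ n) x" .
qed

lemma funpow_collision:
  fixes h :: "nat \<Rightarrow> nat"
  assumes "h ` {..<m} \<subseteq> {..<m}" "x < m"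
  shows "\<exists>k l. 1 \<le> l \<and> l \<le> m \<and> (h ^^ k) x = (h ^^ (k + l)) x"
proof -
  have "(h ^^ i) x < m" for i
    using assms by (induction i) auto
  then obtain i j where "i < j" "j \<le> m" "(h ^^ i) x = (h ^^ j) x"
    using pigeonhole_atMost[of m "\<lambda>i. (h ^^ i) x"] by blast
  then show ?thesis
    by (intro exI[of _ i] exI[of _ "j - i"]) auto
qed

lemma
  assumes "1 \<le> l" "(h ^^ k) x = (h ^^ (k + l)) x"
  shows cycle_length_pos: "0 < cycle_length h x"
    and cycle_length_le: "cycle_length h x \<le> l"
    and cycle_length_cycle: "\<exists>k. (h ^^ k) x = (h ^^ (k + cycle_length h x)) x"
proof -
  have "1 \<le> cycle_length h x \<and> (\<exists>k. (h ^^ k) x = (h ^^ (k + cycle_length h x)) x)"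
    unfolding cycle_length_def by (rule LeastI[of _ l]) (use assms in blast)
  then show "0 < cycle_length h x" "\<exists>k. (h ^^ k) x = (h ^^ (k + cycle_length h x)) x"
    by auto
  show "cycle_length h x \<le> l"
    unfolding cycle_length_def by (rule Least_le) (use assms in blast)
qed

lemma cycle_length_fibre_le:
  fixes H h :: "nat \<Rightarrow> nat"
  assumes "0 < d" "0 < q" and H: "H ` {..<d * q} \<subseteq> {..<d * q}"
    and proj: "\<forall>a<d * q. H a mod d = h (a mod d)" and x: "x < d * q"
  shows "cycle_length H x \<le> cycle_length h (x mod d) * q"
proof -
  let ?c = "cycle_length h (x mod d)"
  have "h ` {..<d} \<subseteq> {..<d}"
  proof (rule image_subsetI)
    fix b assume "b \<in> {..<d}"
    moreover have "b < d * q"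
      using \<open>b \<in> {..<d}\<close> \<open>0 < q\<close> by (simp add: less_le_trans)
    ultimately show "h b \<in> {..<d}"
      using proj \<open>0 < d\<close> by (metis lessThan_iff mod_less mod_less_divisor)
  qed
  then obtain k l where "1 \<le> l" "(h ^^ k) (x mod d) = (h ^^ (k + l)) (x mod d)"
    using funpow_collision[of h d "x mod d"] \<open>0 < d\<close> by auto
  then obtain k where c: "0 < ?c" "\<forall>n\<ge>k. (h ^^ (n + ?c)) (x mod d) = (h ^^ n) (x mod d)"
    using cycle_length_pos cycle_length_cycle funpow_periodic by metis
  have orbit: "(H ^^ n) x < d * q \<and> (H ^^ n) x mod d = (h ^^ n) (x mod d)" for n
    using H proj x by (induction n) auto
  define b where "b i = (H ^^ (k + i * ?c)) x" for i
  have b_mod: "b i mod d = (h ^^ k) (x mod d)" for i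
    using orbit periodic_add_mult[OF c(2), of k i] by (simp add: b_def)
  have "\<forall>i\<le>q. b i div d < q"
    using orbit by (simp add: b_def less_mult_imp_div_less mult.commute)
  then obtain i j where ij: "i < j" "j \<le> q" "b i div d = b j div d"
    using pigeonhole_atMost[of q "\<lambda>i. b i div d"] by blast
  have "b i = b i div d * d + b i mod d"
    by (rule div_mult_mod_eq[symmetric])
  also have "\<dots> = b j div d * d + b j mod d"
    by (simp only: ij(3) b_mod)
  also have "\<dots> = b j"
    by (rule div_mult_mod_eq)
  finally have "b i = b j" .
  moreover have "k + j * ?c = (k + i * ?c) + (j - i) * ?c"
    using ij(1) by (simp flip: add_mult_distrib)
  ultimately have "(H ^^ (k + i * ?c)) x = (H ^^ ((k + i * ?c) + (j - i) * ?c)) x"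
    by (simp add: b_def)
  moreover have "1 \<le> (j - i) * ?c"
    using ij(1) c(1) by simp
  ultimately have "cycle_length H x \<le> (j - i) * ?c"
    by (rule cycle_length_le[rotated])
  also have "\<dots> \<le> ?c * q"
    using ij by (auto simp: mult.commute)
  finally show ?thesis .
qed

section \<open>Orbits modulo \<open>m\<close>\<close>

text \<open>\<open>h\<close> induces a map \<open>\<int>/a \<rightarrow> \<int>/b\<close>.\<close>

definition factors_mod :: "(zhat \<Rightarrow> zhat) \<Rightarrow> nat \<Rightarrow> nat \<Rightarrow> bool" where
  "factors_mod h a b \<longleftrightarrow> (\<forall>y y'. zcong a y y' \<longrightarrow> zcong b (h y) (h y'))"

lemma factors_mod_id: "factors_mod id m m"
  by (simp add: factors_mod_def)

lemma factors_mod_comp: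
  "factors_mod h a b \<Longrightarrow> factors_mod k b c \<Longrightarrow> factors_mod (k \<circ> h) a c"
  by (simp add: factors_mod_def)

lemma congruence_preserving_factors_mod:
  "congruence_preserving f \<Longrightarrow> 0 < m \<Longrightarrow> factors_mod f m m"
  by (simp add: congruence_preserving_def factors_mod_def)

lemma zcontinuous_if_factors_mod:
  assumes "\<And>n. 0 < n \<Longrightarrow> \<exists>m>0. factors_mod g m n"
  shows "zcontinuous g"
  unfolding zcontinuous_def
proof (intro allI impI)
  fix x and n :: nat
  assume "0 < n"
  with assms obtain m where "0 < m" "factors_mod g m n"
    by blast
  then show "\<exists>m>0. \<forall>y. zcong m y x \<longrightarrow> zcong n (g y) (g x)"
    unfolding factors_mod_def by blast
qed

lemma zcong_zhat_of_nat_mod: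
  "0 < m \<Longrightarrow> zcong m (zhat_of_nat (a mod m)) (zhat_of_nat a)"
  by (simp add: zcong_def zproj_zhat_of_nat)

lemma zcong_zhat_of_nat_zproj: "0 < m \<Longrightarrow> zcong m (zhat_of_nat (zproj x m)) x"
  by (simp add: zcong_def zproj_zhat_of_nat zproj_less)

lemma red_less: "0 < m \<Longrightarrow> red h m a < m"
  by (simp add: red_def zproj_less)

lemma red_zproj:
  assumes "factors_mod h m m" "0 < m"
  shows "red h m (zproj x m) = zproj (h x) m"
proof -
  have "zcong m (h (zhat_of_nat (zproj x m))) (h x)"
    using assms zcong_zhat_of_nat_zproj[of m x] unfolding factors_mod_def by blast
  then show ?thesis
    by (simp add: red_def zcong_def)
qed

lemma funpow_red_zproj:
  assumes "factors_mod h m m" "0 < m"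
  shows "(red h m ^^ n) (zproj x m) = zproj ((h ^^ n) x) m"
  by (induction n) (simp_all add: red_zproj[OF assms])

lemma red_mod:
  assumes "factors_mod h d d" "0 < m" "d dvd m"
  shows "red h m a mod d = red h d (a mod d)"
proof -
  have "0 < d"
    using assms(2,3) by (metis dvd_0_left_iff gr0I)
  then have "zcong d (h (zhat_of_nat (a mod d))) (h (zhat_of_nat a))"
    using assms(1) zcong_zhat_of_nat_mod by (simp add: factors_mod_def)
  then show ?thesis
    using assms(2,3) by (simp add: red_def zcong_def zproj_mod)
qed

definition orbit_period :: "(zhat \<Rightarrow> zhat) \<Rightarrow> zhat \<Rightarrow> nat \<Rightarrow> nat" where
  "orbit_period h x m = cycle_length (red h m) (zproj x m)"

lemma red_orbit_collision:
  assumes "factors_mod h m m" "0 < m"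
  shows "\<exists>k l. 1 \<le> l \<and> l \<le> m \<and> (red h m ^^ k) (zproj x m) = (red h m ^^ (k + l)) (zproj x m)"
proof -
  have "red h m ` {..<m} \<subseteq> {..<m}"
    using assms(2) by (auto simp: red_less)
  then show ?thesis
    using funpow_collision[of "red h m" m "zproj x m"] assms(2) by (simp add: zproj_less)
qed

lemma orbit_period_bounds:
  assumes "factors_mod h m m" "0 < m"
  shows "0 < orbit_period h x m" "orbit_period h x m \<le> m"
proof -
  obtain k l where "1 \<le> l" "l \<le> m"
    "(red h m ^^ k) (zproj x m) = (red h m ^^ (k + l)) (zproj x m)"
    using red_orbit_collision[OF assms] by blast
  then show "0 < orbit_period h x m" "orbit_period h x m \<le> m"
    unfolding orbit_period_def using cycle_length_pos cycle_length_le le_trans by blast+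
qed

lemma orbit_periodic:
  assumes "factors_mod h m m" "0 < m"
  shows "\<exists>k. \<forall>n\<ge>k. zcong m ((h ^^ (n + orbit_period h x m)) x) ((h ^^ n) x)"
proof -
  obtain k l where "1 \<le> l" "(red h m ^^ k) (zproj x m) = (red h m ^^ (k + l)) (zproj x m)"
    using red_orbit_collision[OF assms] by blast
  then obtain k' where
    "(red h m ^^ k') (zproj x m) = (red h m ^^ (k' + orbit_period h x m)) (zproj x m)"
    unfolding orbit_period_def by (blast dest: cycle_length_cycle)
  from funpow_periodic[OF this] show ?thesis
    by (auto simp: zcong_def funpow_red_zproj[OF assms])
qed

lemma orbit_period_mult_le:
  assumes "congruence_preserving f" "0 < d" "0 < q"
  shows "orbit_period f x (d * q) \<le> orbit_period f x d * q"
proof -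
  have "factors_mod f d d" "0 < d * q"
    using assms congruence_preserving_factors_mod by auto
  then have "\<forall>a<d * q. red f (d * q) a mod d = red f d (a mod d)"
    by (simp add: red_mod)
  moreover have "red f (d * q) ` {..<d * q} \<subseteq> {..<d * q}"
    using \<open>0 < d * q\<close> by (auto simp: red_less)
  ultimately show ?thesis
    using cycle_length_fibre_le[of d q "red f (d * q)" "red f d" "zproj x (d * q)"] assms(2,3)
    by (simp add: orbit_period_def zproj_less zproj_mod)
qed

lemma orbit_period_dvd_period: "0 < p \<Longrightarrow> orbit_period f x p dvd period f p"
  unfolding orbit_period_def period_def by (simp add: zproj_less)

lemma orbit_period_less:
  assumes cp: "congruence_preserving f" and ts: "tower_stable f" and "1 < m"
  shows "orbit_period f x m < m"
proof -
  obtain p where p: "prime p" "p dvd m"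
    using \<open>1 < m\<close> prime_factor_nat[of m] by auto
  then obtain q where m: "m = p * q"
    by (elim dvdE)
  have "0 < p" "0 < q"
    using p m \<open>1 < m\<close> prime_gt_0_nat by (auto intro: gr0I)
  have "\<not> p dvd period f p"
    using ts p unfolding tower_stable_def by (metis less_irrefl power_one_right)
  then have "orbit_period f x p \<noteq> p"
    using orbit_period_dvd_period[OF \<open>0 < p\<close>, of f x] by auto
  then have "orbit_period f x p < p"
    using orbit_period_bounds(2)[OF congruence_preserving_factors_mod[OF cp \<open>0 < p\<close>] \<open>0 < p\<close>]
    by (simp add: order_less_le)
  have "orbit_period f x m \<le> orbit_period f x p * q"
    using orbit_period_mult_le[OF cp \<open>0 < p\<close> \<open>0 < q\<close>] m by simp
  also have "\<dots> < p * q"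
    using \<open>orbit_period f x p < p\<close> \<open>0 < q\<close> by simp
  finally show ?thesis
    using m by simp
qed

definition eventually_periodic_mod :: "(zhat \<Rightarrow> zhat) \<Rightarrow> zhat \<Rightarrow> nat \<Rightarrow> bool" where
  "eventually_periodic_mod h x m \<longleftrightarrow>
     (\<exists>N P. 0 < P \<and> (\<forall>n\<ge>N. zcong m ((h ^^ (n + P)) x) ((h ^^ n) x)))"

lemma eventually_periodic_mod_if_factors_mod:
  assumes "factors_mod h m m" "0 < m"
  shows "eventually_periodic_mod h x m"
  using orbit_periodic[OF assms] orbit_period_bounds(1)[OF assms]
  unfolding eventually_periodic_mod_def by blast

lemma eventually_periodic_mod_through:
  assumes "eventually_periodic_mod h x M" "factors_mod (h ^^ r) M m"
  shows "eventually_periodic_mod h x m"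
proof -
  obtain N P where "0 < P" and per: "\<forall>n\<ge>N. zcong M ((h ^^ (n + P)) x) ((h ^^ n) x)"
    using assms(1) unfolding eventually_periodic_mod_def by blast
  have "zcong m ((h ^^ (n + P)) x) ((h ^^ n) x)" if "N + r \<le> n" for n
  proof -
    have "r \<le> n"
      using that by simp
    then obtain d where n: "n = r + d"
      using le_Suc_ex by blast
    with that have "N \<le> d"
      by simp
    have "zcong m ((h ^^ r) ((h ^^ (d + P)) x)) ((h ^^ r) ((h ^^ d) x))"
      using per assms(2) \<open>N \<le> d\<close> unfolding factors_mod_def by blast
    then show ?thesis
      by (simp add: n funpow_add add.assoc)
  qed
  with \<open>0 < P\<close> show ?thesis
    unfolding eventually_periodic_mod_def by blast
qed

section \<open>Limits along admissible sequences\<close>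

text \<open>Since \<open>n dvd fact i\<close> for \<open>n \<le> i\<close>, \<open>nat_approx u i \<equiv> u (mod n)\<close> for all large \<open>i\<close>.\<close>

definition nat_approx :: "zhat \<Rightarrow> nat \<Rightarrow> nat" where
  "nat_approx u i = fact i + zproj u (fact i)"

lemma adm_seq_nat_approx: "adm_seq (nat_approx u) u"
  unfolding adm_seq_def
proof (intro conjI allI)
  fix i show "0 < nat_approx u i"
    by (simp add: nat_approx_def)
next
  have "i \<le> nat_approx u i" for i
    using fact_ge_self[of i] by (simp add: nat_approx_def)
  then show "filterlim (nat_approx u) at_top sequentially"
    by (auto simp: filterlim_at_top eventually_sequentially intro: order.trans)
next
  have "zcong n (zhat_of_nat (nat_approx u i)) u" if "0 < n" "n \<le> i" for n i
  proof -
    have "n dvd fact i"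
      using that by (simp add: dvd_fact)
    then show ?thesis
      using that by (simp add: zcong_def zproj_zhat_of_nat nat_approx_def zproj_mod
          flip: mod_add_left_eq)
  qed
  then show "ztendsto (\<lambda>i. zhat_of_nat (nat_approx u i)) u"
    by (auto simp: ztendsto_def eventually_sequentially)
qed

lemma adm_seq_eventually_ge: "adm_seq ns u \<Longrightarrow> eventually (\<lambda>i. N \<le> ns i) sequentially"
  unfolding adm_seq_def filterlim_at_top by blast

lemma adm_seq_eventually_mod:
  assumes "adm_seq ns u" "0 < P"
  shows "eventually (\<lambda>i. ns i mod P = zproj u P) sequentially"
proof -
  have "eventually (\<lambda>i. zcong P (zhat_of_nat (ns i)) u) sequentially"
    using assms unfolding adm_seq_def ztendsto_def by blast
  then show ?thesis
    by (rule eventually_mono) (simp add: zcong_def zproj_zhat_of_nat[OF assms(2)])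
qed

lemma ztendsto_zproj:
  "ztendsto X L \<Longrightarrow> 0 < m \<Longrightarrow> eventually (\<lambda>i. zproj (X i) m = zproj L m) sequentially"
  unfolding ztendsto_def zcong_def by blast

lemma ztendsto_if_residues_eventually_const:
  assumes "\<And>m. 0 < m \<Longrightarrow> \<exists>v. eventually (\<lambda>i. zproj (X i) m = v) sequentially"
  shows "\<exists>L. ztendsto X L"
proof -
  define v where "v m = (SOME v. eventually (\<lambda>i. zproj (X i) m = v) sequentially)" for m
  have v: "eventually (\<lambda>i. zproj (X i) m = v m) sequentially" if "0 < m" for m
    unfolding v_def using someI_ex[OF assms[OF that]] .
  define F where "F m = (if m = 0 then 0 else v m)" for m
  have "F \<in> zhat_rep"
    unfolding zhat_rep_def
  proof (intro CollectI conjI allI impI)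
    show "F 0 = 0"
      by (simp add: F_def)
  next
    fix n :: nat assume "0 < n"
    obtain i where "zproj (X i) n = v n"
      using v[OF \<open>0 < n\<close>] by (auto simp: eventually_sequentially)
    then show "F n < n"
      using \<open>0 < n\<close> zproj_less[OF \<open>0 < n\<close>, of "X i"] by (simp add: F_def)
  next
    fix n m :: nat assume "0 < m" "n dvd m"
    then have "0 < n"
      by (metis dvd_0_left_iff gr0I)
    obtain i where "zproj (X i) n = v n" "zproj (X i) m = v m"
      using eventually_conj[OF v[OF \<open>0 < n\<close>] v[OF \<open>0 < m\<close>]]
      by (auto simp: eventually_sequentially)
    then show "F m mod n = F n"
      using zproj_mod[OF \<open>0 < m\<close> \<open>n dvd m\<close>, of "X i"] \<open>0 < m\<close> \<open>0 < n\<close>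
      by (simp add: F_def)
  qed
  then have "ztendsto X (Abs_zhat F)"
    using v by (simp add: ztendsto_def zcong_def zproj_def Abs_zhat_inverse F_def)
  then show ?thesis ..
qed

lemma eventually_zcong_funpow_adm_seq:
  fixes h :: "zhat \<Rightarrow> zhat"
  assumes "0 < P" and per: "\<forall>n\<ge>N. zcong m ((h ^^ (n + P)) x) ((h ^^ n) x)"
    and "N \<le> n" "n mod P = zproj u P" and "adm_seq ns u"
  shows "eventually (\<lambda>i. zcong m ((h ^^ ns i) x) ((h ^^ n) x)) sequentially"
  using eventually_conj[OF adm_seq_eventually_ge[OF \<open>adm_seq ns u\<close>, of N]
      adm_seq_eventually_mod[OF \<open>adm_seq ns u\<close> \<open>0 < P\<close>]]
proof (rule eventually_mono)
  fix i assume i: "N \<le> ns i \<and> ns i mod P = zproj u P"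
  have "zproj ((h ^^ ns i) x) m = zproj ((h ^^ n) x) m"
    by (rule periodic_mod_eq[where a = "\<lambda>n. zproj ((h ^^ n) x) m"])
      (use per i assms(3,4) in \<open>auto simp: zcong_def\<close>)
  then show "zcong m ((h ^^ ns i) x) ((h ^^ n) x)"
    by (simp add: zcong_def)
qed

lemma ex_lim_funpow_adm_seq:
  assumes "\<And>m. 0 < m \<Longrightarrow> eventually_periodic_mod h x m"
  shows "\<exists>L. \<forall>ns. adm_seq ns u \<longrightarrow> ztendsto (\<lambda>i. (h ^^ ns i) x) L"
proof -
  have common: "\<exists>v. \<forall>ns. adm_seq ns u \<longrightarrow> eventually (\<lambda>i. zproj ((h ^^ ns i) x) m = v) sequentially"
    if "0 < m" for m
  proof -
    obtain N P where "0 < P" "\<forall>n\<ge>N. zcong m ((h ^^ (n + P)) x) ((h ^^ n) x)"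
      using assms[OF \<open>0 < m\<close>] unfolding eventually_periodic_mod_def by blast
    moreover have "N \<le> N * P + zproj u P" "(N * P + zproj u P) mod P = zproj u P"
      using \<open>0 < P\<close> zproj_less[OF \<open>0 < P\<close>, of u] by (simp_all add: trans_le_add1)
    ultimately show ?thesis
      using eventually_zcong_funpow_adm_seq unfolding zcong_def by blast
  qed
  obtain L where L: "ztendsto (\<lambda>i. (h ^^ nat_approx u i) x) L"
    using ztendsto_if_residues_eventually_const common adm_seq_nat_approx by meson
  have "ztendsto (\<lambda>i. (h ^^ ns i) x) L" if "adm_seq ns u" for ns
    unfolding ztendsto_def zcong_def
  proof (intro allI impI)
    fix m :: nat assume "0 < m"
    then obtain v where v: "\<forall>ns. adm_seq ns u \<longrightarrow> eventually (\<lambda>i. zproj ((h ^^ ns i) x) m = v) sequentially"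
      using common by blast
    obtain i where "zproj ((h ^^ nat_approx u i) x) m = v" "zproj ((h ^^ nat_approx u i) x) m = zproj L m"
      using eventually_conj[OF v[rule_format, OF adm_seq_nat_approx] ztendsto_zproj[OF L \<open>0 < m\<close>]]
      by (auto simp: eventually_sequentially)
    then show "eventually (\<lambda>i. zproj ((h ^^ ns i) x) m = zproj L m) sequentially"
      using v that by auto
  qed
  then show ?thesis
    by blast
qed

lemma ztendsto_zup:
  assumes "\<exists>L. \<forall>ns. adm_seq ns u \<longrightarrow> ztendsto (\<lambda>i. (h ^^ ns i) x) L" "adm_seq ns u"
  shows "ztendsto (\<lambda>i. (h ^^ ns i) x) (zup h x u)"
  using someI_ex[OF assms(1)] assms(2) unfolding zup_def by blast

lemma zcong_zup_funpow:
  assumes "\<And>m. 0 < m \<Longrightarrow> eventually_periodic_mod h x m"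
    and "0 < m" "0 < P" "\<forall>n\<ge>N. zcong m ((h ^^ (n + P)) x) ((h ^^ n) x)"
    and "N \<le> n" "n mod P = zproj u P"
  shows "zcong m (zup h x u) ((h ^^ n) x)"
proof -
  have "ztendsto (\<lambda>i. (h ^^ nat_approx u i) x) (zup h x u)"
    using ztendsto_zup ex_lim_funpow_adm_seq[OF assms(1)] adm_seq_nat_approx by blast
  from eventually_conj[OF ztendsto_zproj[OF this \<open>0 < m\<close>]
      eventually_zcong_funpow_adm_seq[OF assms(3-6) adm_seq_nat_approx]]
  obtain i where "zproj ((h ^^ nat_approx u i) x) m = zproj (zup h x u) m"
    "zcong m ((h ^^ nat_approx u i) x) ((h ^^ n) x)"
    by (auto simp: eventually_sequentially)
  then show ?thesis
    by (simp add: zcong_def)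
qed

section \<open>The map \<open>f\<Up>\<^sub>s\<close>\<close>

lemma zup_factors_mod_orbit_period:
  assumes cp: "congruence_preserving f" and "0 < m"
  shows "factors_mod (zup f s) (orbit_period f s m) m"
proof -
  let ?c = "orbit_period f s m"
  have fm: "factors_mod f m m"
    using congruence_preserving_factors_mod[OF cp \<open>0 < m\<close>] .
  have "0 < ?c"
    using orbit_period_bounds(1)[OF fm \<open>0 < m\<close>] .
  obtain k where per: "\<forall>n\<ge>k. zcong m ((f ^^ (n + ?c)) s) ((f ^^ n) s)"
    using orbit_periodic[OF fm \<open>0 < m\<close>] by blast
  have "zcong m (zup f s y) ((f ^^ (k * ?c + zproj y ?c)) s)" for y
  proof (rule zcong_zup_funpow[OF _ \<open>0 < m\<close> \<open>0 < ?c\<close> per])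
    show "eventually_periodic_mod f s n" if "0 < n" for n
      using eventually_periodic_mod_if_factors_mod congruence_preserving_factors_mod cp that
      by blast
    show "k \<le> k * ?c + zproj y ?c"
      using \<open>0 < ?c\<close> by (simp add: trans_le_add1)
    show "(k * ?c + zproj y ?c) mod ?c = zproj y ?c"
      using zproj_less[OF \<open>0 < ?c\<close>, of y] by simp
  qed
  then show ?thesis
    unfolding factors_mod_def by (metis zcong_def)
qed

lemma ex_fixed_orbit_period_factors_mod:
  assumes cp: "congruence_preserving f"
  shows "0 < m \<Longrightarrow> \<exists>M r. 0 < M \<and> orbit_period f s M = M \<and> factors_mod (zup f s ^^ r) M m"
proof (induction m rule: less_induct)
  case (less m)
  let ?c = "orbit_period f s m"
  have fm: "factors_mod f m m"
    using congruence_preserving_factors_mod[OF cp less.prems] .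
  show ?case
  proof (cases "?c = m")
    case True
    have "factors_mod (zup f s ^^ 0) m m"
      using factors_mod_id by simp
    with True less.prems show ?thesis
      by blast
  next
    case False
    then have "?c < m" "0 < ?c"
      using orbit_period_bounds[OF fm less.prems, where x = s] by auto
    then obtain M r where "0 < M" "orbit_period f s M = M" "factors_mod (zup f s ^^ r) M ?c"
      using less.IH by blast
    moreover have "factors_mod (zup f s ^^ Suc r) M m"
      using factors_mod_comp[OF \<open>factors_mod (zup f s ^^ r) M ?c\<close>
          zup_factors_mod_orbit_period[OF cp less.prems]] by simp
    ultimately show ?thesis
      by blast
  qed
qed

lemma zup_eventually_periodic_mod:
  assumes cp: "congruence_preserving f" and "0 < m"
  shows "eventually_periodic_mod (zup f s) x m"
proof -
  obtain M r where "0 < M" "orbit_period f s M = M" "factors_mod (zup f s ^^ r) M m"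
    using ex_fixed_orbit_period_factors_mod[OF cp \<open>0 < m\<close>] by blast
  have "factors_mod (zup f s) M M"
    using zup_factors_mod_orbit_period[OF cp \<open>0 < M\<close>, where s = s] \<open>orbit_period f s M = M\<close>
    by simp
  then have "eventually_periodic_mod (zup f s) x M"
    using \<open>0 < M\<close> by (rule eventually_periodic_mod_if_factors_mod)
  then show ?thesis
    using \<open>factors_mod (zup f s ^^ r) M m\<close> by (rule eventually_periodic_mod_through)
qed

lemma profinite_preperiodic_zup:
  assumes cp: "congruence_preserving f"
  shows "profinite_preperiodic (zup f s)"
  unfolding profinite_preperiodic_def
proof (intro conjI allI)
  show "zcontinuous (zup f s)"
  proof (rule zcontinuous_if_factors_mod)
    fix n :: nat assume "0 < n"
    have "0 < orbit_period f s n"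
      using orbit_period_bounds(1)[OF congruence_preserving_factors_mod[OF cp \<open>0 < n\<close>] \<open>0 < n\<close>] .
    with zup_factors_mod_orbit_period[OF cp \<open>0 < n\<close>, where s = s]
    show "\<exists>m>0. factors_mod (zup f s) m n"
      by blast
  qed
  show "\<exists>L. \<forall>ns. adm_seq ns u \<longrightarrow> ztendsto (\<lambda>i. (zup f s ^^ ns i) x) L" for x u
    by (rule ex_lim_funpow_adm_seq) (rule zup_eventually_periodic_mod[OF cp])
qed

lemma ex_funpow_zup_const_mod:
  assumes cp: "congruence_preserving f" and ts: "tower_stable f" and "0 < m"
  shows "\<exists>r. factors_mod (zup f s ^^ r) 1 m"
proof -
  obtain M r where "0 < M" "orbit_period f s M = M" "factors_mod (zup f s ^^ r) M m"
    using ex_fixed_orbit_period_factors_mod[OF cp \<open>0 < m\<close>] by blast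
  moreover from this have "M = 1"
    using orbit_period_less[OF cp ts] by (metis less_one nat_neq_iff)
  ultimately show ?thesis
    by blast
qed

lemma zcong_zup_zup:
  assumes cp: "congruence_preserving f" and ts: "tower_stable f" and "0 < m"
  shows "zcong m (zup (zup f s) t u) (zup (zup f s) t' u')"
proof -
  let ?g = "zup f s"
  obtain r where r: "factors_mod (?g ^^ r) 1 m"
    using ex_funpow_zup_const_mod[OF cp ts \<open>0 < m\<close>] by blast
  have "zcong m (zup ?g t u) ((?g ^^ r) y)" for t u y
  proof -
    obtain N P where "0 < P" and per: "\<forall>n\<ge>N. zcong m ((?g ^^ (n + P)) t) ((?g ^^ n) t)"
      using zup_eventually_periodic_mod[OF cp \<open>0 < m\<close>]
      unfolding eventually_periodic_mod_def by blast
    define n where "n = (N + r) * P + zproj u P"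
    have "N + r \<le> n"
      using \<open>0 < P\<close> by (simp add: n_def trans_le_add1)
    moreover have "n mod P = zproj u P"
      using zproj_less[OF \<open>0 < P\<close>, of u] by (simp add: n_def)
    ultimately have "zcong m (zup ?g t u) ((?g ^^ n) t)"
      using zcong_zup_funpow[OF zup_eventually_periodic_mod[OF cp] \<open>0 < m\<close> \<open>0 < P\<close> per]
      by simp
    moreover have "(?g ^^ n) t = (?g ^^ r) ((?g ^^ (n - r)) t)"
      using \<open>N + r \<le> n\<close> funpow_add[of r "n - r" ?g] by simp
    ultimately show ?thesis
      using r zcong_one unfolding factors_mod_def zcong_def by metis
  qed
  then show ?thesis
    unfolding zcong_def by metis
qed

theorem theorem3p13:
  fixes f :: "zhat \<Rightarrow> zhat" and s :: zhat
  assumes "congruence_preserving f"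
  shows "profinite_preperiodic (zup f s)
    \<and> (tower_stable f \<longrightarrow> (\<exists>c. \<forall>t u. zup (zup f s) t u = c))"
proof (intro conjI impI)
  show "profinite_preperiodic (zup f s)"
    using profinite_preperiodic_zup[OF assms] .
next
  assume "tower_stable f"
  then have "zup (zup f s) t u = zup (zup f s) t' u'" for t u t' u'
    by (intro zhat_eqI) (use zcong_zup_zup[OF assms] in \<open>simp add: zcong_def\<close>)
  then show "\<exists>c. \<forall>t u. zup (zup f s) t u = c"
    by blast
qed

end
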